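(* Let $OPT_{ST}=(T\cup OPT,F)$ be a feasible Steiner tree for the associated Steiner tree instance of a CacAP instance, with $|F|=|OPT|+t-1$ where $OPT$ is an optimal CacAP solution and $t=|T|$, in which every terminal has degree $1$; root it at a Steiner node $r$ adjacent to at least one terminal, and apply the random marking scheme described in the context. Then for every $\ell\in OPT$, $c(\ell)\le \hat H_{d(\ell)}$, where $\hat H_i:=\sum_{j\ge0}\frac{1}{2^{j+1}}H_{i+j}$.
   Context: A cactus is a connected undirected multigraph (length-2 cycles allowed) in which every edge belongs to exactly one cycle. A CacAP instance is a cactus $G=(V,E)$ with a link set $L$; $A\subseteq L$ is feasible if $(V,E\cup A)$ is $3$-edge-connected; $OPT$ is a minimum-cardinality feasible solution. For a link $\ell=\{v_0,v_{q+1}\}$, let $v_1,\dots,v_q$ be the nodes of degree $\ge4$ other than $v_0,v_{q+1}$ lying (in order) on every simple $v_0$-$v_{q+1}$ path; the pairs $\{v_i,v_{i+1}\}$ are the projections of $\ell$, each on a distinct cycle. Two links with endpoints on a common cycle $C$ cross if they share an endpoint or a simple path along $C$ between the endpoints of one contains exactly one endpoint of the other as an internal node; general links cross if some of their projections cross. The associated Steiner tree instance $G_{ST}=(T\cup L,E_{ST})$ has terminals $T$ = degree-$2$ nodes of $G$, Steiner nodes $L$, edges $\{\ell,v\}$ for each link $\ell$ with endpoint $v\in T$, and $\{\ell,\ell'\}$ for crossing links. A feasible Steiner tree is a subtree of $G_{ST}$ containing $T$. In the rooted tree $OPT_{ST}$, for a Steiner node $\ell$, $d(\ell)$ is its number of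 children and $t(\ell)$ its number of terminal children. Marking scheme: independently for each Steiner node $\ell$, if $t(\ell)>0$, one terminal child $v$ of $\ell$ is chosen uniformly at random and $\{\ell,v\}$ is marked; otherwise one child $\ell'$ of $\ell$ is chosen uniformly at random and $\{\ell,\ell'\}$ is marked. All other edges are unmarked. Each Steiner node $\ell$ has exactly one marked child edge $m(\ell)$. For an edge $e\in F$, $W(e)$ is the set of pairs of terminals $\{t',t''\}$ such that the simple $t'$-$t''$ path in $OPT_{ST}$ contains $e$ and exactly one unmarked edge; $w(e)=|W(e)|$. $H_i=1+\frac12+\cdots+\frac1i$, and $c(\ell)=E[H_{w(m(\ell))}]$. *)

theory Defs
  imports "HOL-Analysis.Harmonic_Numbers"
begin

definition mgraph :: "'v set \<Rightarrow> 'e set \<Rightarrow> ('e \<Rightarrow> 'v set) \<Rightarrow> bool" where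
  "mgraph V E ends \<longleftrightarrow> finite V \<and> finite E \<and> (\<forall>e\<in>E. ends e \<subseteq> V \<and> card (ends e) = 2)"

definition gpath :: "'v set \<Rightarrow> 'e set \<Rightarrow> ('e \<Rightarrow> 'v set) \<Rightarrow> 'v list \<Rightarrow> bool" where
  "gpath V E ends p \<longleftrightarrow> p \<noteq> [] \<and> distinct p \<and> set p \<subseteq> V \<and>
     (\<forall>i. Suc i < length p \<longrightarrow> (\<exists>e\<in>E. ends e = {p ! i, p ! Suc i}))"

definition connected_mg :: "'v set \<Rightarrow> 'e set \<Rightarrow> ('e \<Rightarrow> 'v set) \<Rightarrow> bool" where
  "connected_mg V E ends \<longleftrightarrow>
     (\<forall>u\<in>V. \<forall>v\<in>V. \<exists>p. gpath V E ends p \<and> hd p = u \<and> last p = v)"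

text \<open>A cycle given by its cyclic node sequence vs and edge sequence es
  (edge es!i joins vs!i and vs!(i+1 mod k)); length 2 cycles are allowed.\<close>
definition cycle_witness :: "'e set \<Rightarrow> ('e \<Rightarrow> 'v set) \<Rightarrow> 'v list \<Rightarrow> 'e list \<Rightarrow> bool" where
  "cycle_witness E ends vs es \<longleftrightarrow> length vs = length es \<and> 2 \<le> length es \<and>
     distinct vs \<and> distinct es \<and> set es \<subseteq> E \<and>
     (\<forall>i<length es. ends (es ! i) = {vs ! i, vs ! ((i + 1) mod length vs)})"

definition is_cycle :: "'e set \<Rightarrow> ('e \<Rightarrow> 'v set) \<Rightarrow> 'e set \<Rightarrow> bool" where
  "is_cycle E ends C \<longleftrightarrow> (\<exists>vs es. cycle_witness E ends vs es \<and> C = set es)"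

definition cactus :: "'v set \<Rightarrow> 'e set \<Rightarrow> ('e \<Rightarrow> 'v set) \<Rightarrow> bool" where
  "cactus V E ends \<longleftrightarrow> mgraph V E ends \<and> connected_mg V E ends \<and>
     (\<forall>e\<in>E. \<exists>!C. is_cycle E ends C \<and> e \<in> C)"

definition deg :: "'e set \<Rightarrow> ('e \<Rightarrow> 'v set) \<Rightarrow> 'v \<Rightarrow> nat" where
  "deg E ends v = card {e\<in>E. v \<in> ends e}"

definition cacap_instance ::
  "'v set \<Rightarrow> 'e set \<Rightarrow> ('e \<Rightarrow> 'v set) \<Rightarrow> 'l set \<Rightarrow> ('l \<Rightarrow> 'v set) \<Rightarrow> bool" where
  "cacap_instance V E ends L lends \<longleftrightarrow> cactus V E ends \<and> finite L \<and>
     (\<forall>l\<in>L. lends l \<subseteq> V \<and> card (lends l) = 2)"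

definition crosses_cut :: "'v set \<Rightarrow> 'v set \<Rightarrow> bool" where
  "crosses_cut X S \<longleftrightarrow> X \<inter> S \<noteq> {} \<and> X - S \<noteq> {}"

definition three_edge_connected ::
  "'v set \<Rightarrow> 'e set \<Rightarrow> ('e \<Rightarrow> 'v set) \<Rightarrow> 'l set \<Rightarrow> ('l \<Rightarrow> 'v set) \<Rightarrow> bool" where
  "three_edge_connected V E ends A lends \<longleftrightarrow>
     (\<forall>S. S \<subseteq> V \<and> S \<noteq> {} \<and> S \<noteq> V \<longrightarrow>
        3 \<le> card {e\<in>E. crosses_cut (ends e) S} + card {l\<in>A. crosses_cut (lends l) S})"

definition cacap_feasible ::
  "'v set \<Rightarrow> 'e set \<Rightarrow> ('e \<Rightarrow> 'v set) \<Rightarrow> 'l set \<Rightarrow> ('l \<Rightarrow> 'v set) \<Rightarrow> 'l set \<Rightarrow> bool" where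
  "cacap_feasible V E ends L lends A \<longleftrightarrow> A \<subseteq> L \<and> three_edge_connected V E ends A lends"

definition cacap_opt ::
  "'v set \<Rightarrow> 'e set \<Rightarrow> ('e \<Rightarrow> 'v set) \<Rightarrow> 'l set \<Rightarrow> ('l \<Rightarrow> 'v set) \<Rightarrow> 'l set \<Rightarrow> bool" where
  "cacap_opt V E ends L lends OPT \<longleftrightarrow> cacap_feasible V E ends L lends OPT \<and>
     (\<forall>A. cacap_feasible V E ends L lends A \<longrightarrow> card OPT \<le> card A)"

definition key_nodes :: "'v set \<Rightarrow> 'e set \<Rightarrow> ('e \<Rightarrow> 'v set) \<Rightarrow> 'v \<Rightarrow> 'v \<Rightarrow> 'v set" where
  "key_nodes V E ends u v = {x \<in> V - {u, v}. 4 \<le> deg E ends x \<and>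
      (\<forall>p. gpath V E ends p \<and> hd p = u \<and> last p = v \<longrightarrow> x \<in> set p)}"

text \<open>Projections of a link: consecutive pairs of v_0, v_1, ..., v_q, v_(q+1), the order
  being the order along a simple path between the endpoints.\<close>
definition projections ::
  "'v set \<Rightarrow> 'e set \<Rightarrow> ('e \<Rightarrow> 'v set) \<Rightarrow> ('l \<Rightarrow> 'v set) \<Rightarrow> 'l \<Rightarrow> 'v set set" where
  "projections V E ends lends l = {{xs ! i, xs ! Suc i} | xs i. Suc i < length xs \<and>
      (\<exists>u v p. lends l = {u, v} \<and> gpath V E ends p \<and> hd p = u \<and> last p = v \<and>
         xs = filter (\<lambda>x. x \<in> key_nodes V E ends u v \<union> {u, v}) p)}"

text \<open>Internal nodes of the path along the cycle (cyclic node list vs) going forward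
  from position i to position j.\<close>
definition arc_internal :: "'v list \<Rightarrow> nat \<Rightarrow> nat \<Rightarrow> 'v set" where
  "arc_internal vs i j = {vs ! ((i + k) mod length vs) | k.
      0 < k \<and> k < (j + length vs - i) mod length vs}"

definition cross_on_cycle :: "'v list \<Rightarrow> 'v set \<Rightarrow> 'v set \<Rightarrow> bool" where
  "cross_on_cycle vs p q \<longleftrightarrow> p \<inter> q \<noteq> {} \<or>
     (\<exists>i<length vs. \<exists>j<length vs. p = {vs ! i, vs ! j} \<and> card (q \<inter> arc_internal vs i j) = 1) \<or>
     (\<exists>i<length vs. \<exists>j<length vs. q = {vs ! i, vs ! j} \<and> card (p \<inter> arc_internal vs i j) = 1)"

definition proj_cross :: "'e set \<Rightarrow> ('e \<Rightarrow> 'v set) \<Rightarrow> 'v set \<Rightarrow> 'v set \<Rightarrow> bool" where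
  "proj_cross E ends p q \<longleftrightarrow> (\<exists>vs es. cycle_witness E ends vs es \<and>
      p \<subseteq> set vs \<and> q \<subseteq> set vs \<and> cross_on_cycle vs p q)"

definition links_cross ::
  "'v set \<Rightarrow> 'e set \<Rightarrow> ('e \<Rightarrow> 'v set) \<Rightarrow> ('l \<Rightarrow> 'v set) \<Rightarrow> 'l \<Rightarrow> 'l \<Rightarrow> bool" where
  "links_cross V E ends lends l l' \<longleftrightarrow>
     (\<exists>p\<in>projections V E ends lends l. \<exists>q\<in>projections V E ends lends l'. proj_cross E ends p q)"

section \<open>Associated Steiner tree instance (nodes: Inl terminal, Inr link)\<close>

definition terminals :: "'v set \<Rightarrow> 'e set \<Rightarrow> ('e \<Rightarrow> 'v set) \<Rightarrow> 'v set" where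
  "terminals V E ends = {v\<in>V. deg E ends v = 2}"

definition st_edges ::
  "'v set \<Rightarrow> 'e set \<Rightarrow> ('e \<Rightarrow> 'v set) \<Rightarrow> 'l set \<Rightarrow> ('l \<Rightarrow> 'v set) \<Rightarrow> ('v + 'l) set set" where
  "st_edges V E ends L lends =
     {{Inr l, Inl v} | l v. l \<in> L \<and> v \<in> lends l \<and> v \<in> terminals V E ends} \<union>
     {{Inr l, Inr l'} | l l'. l \<in> L \<and> l' \<in> L \<and> l \<noteq> l' \<and> links_cross V E ends lends l l'}"

definition tpath :: "'a set set \<Rightarrow> 'a list \<Rightarrow> bool" where
  "tpath F xs \<longleftrightarrow> xs \<noteq> [] \<and> distinct xs \<and> (\<forall>i. Suc i < length xs \<longrightarrow> {xs ! i, xs ! Suc i} \<in> F)"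

definition path_edges :: "'a list \<Rightarrow> 'a set set" where
  "path_edges xs = {{xs ! i, xs ! Suc i} | i. Suc i < length xs}"

definition is_tree :: "'a set \<Rightarrow> 'a set set \<Rightarrow> bool" where
  "is_tree N F \<longleftrightarrow> finite N \<and> N \<noteq> {} \<and> (\<forall>e\<in>F. e \<subseteq> N \<and> card e = 2) \<and>
     (\<forall>x\<in>N. \<forall>y\<in>N. \<exists>xs. tpath F xs \<and> hd xs = x \<and> last xs = y) \<and>
     \<not> (\<exists>xs. 3 \<le> length xs \<and> tpath F xs \<and> {last xs, hd xs} \<in> F)"

definition steiner_tree ::
  "'v set \<Rightarrow> 'e set \<Rightarrow> ('e \<Rightarrow> 'v set) \<Rightarrow> 'l set \<Rightarrow> ('l \<Rightarrow> 'v set) \<Rightarrow>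
   ('v + 'l) set \<Rightarrow> ('v + 'l) set set \<Rightarrow> bool" where
  "steiner_tree V E ends L lends N F \<longleftrightarrow> is_tree N F \<and> F \<subseteq> st_edges V E ends L lends \<and>
     N \<subseteq> Inl ` terminals V E ends \<union> Inr ` L \<and> Inl ` terminals V E ends \<subseteq> N"

definition children :: "'a set set \<Rightarrow> 'a \<Rightarrow> 'a \<Rightarrow> 'a set" where
  "children F r x = {y. \<exists>xs. tpath F (xs @ [x, y]) \<and> hd (xs @ [x, y]) = r}"

definition mark_candidates :: "'v set \<Rightarrow> ('v + 'l) set set \<Rightarrow> ('v + 'l) \<Rightarrow> 'l \<Rightarrow> ('v + 'l) set" where
  "mark_candidates T F r l =
     (if children F r (Inr l) \<inter> Inl ` T \<noteq> {} then children F r (Inr l) \<inter> Inl ` T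
      else children F r (Inr l))"

text \<open>All outcomes of the marking scheme (one choice per Steiner node); independent uniform
  choices = uniform distribution on this product set.\<close>
definition markings :: "'v set \<Rightarrow> 'l set \<Rightarrow> ('v + 'l) set set \<Rightarrow> ('v + 'l) \<Rightarrow> ('l \<Rightarrow> ('v + 'l)) set" where
  "markings T S F r = (\<Pi>\<^sub>E l\<in>S. mark_candidates T F r l)"

definition marked_edges :: "'l set \<Rightarrow> ('l \<Rightarrow> ('v + 'l)) \<Rightarrow> ('v + 'l) set set" where
  "marked_edges S m = {{Inr l, m l} | l. l \<in> S}"

definition W_set :: "'v set \<Rightarrow> 'l set \<Rightarrow> ('v + 'l) set set \<Rightarrow> ('l \<Rightarrow> ('v + 'l)) \<Rightarrow> ('v + 'l) set \<Rightarrow> 'v set set" where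
  "W_set T S F m e = {{a, b} | a b. a \<in> T \<and> b \<in> T \<and> a \<noteq> b \<and>
      (\<exists>xs. tpath F xs \<and> hd xs = Inl a \<and> last xs = Inl b \<and> e \<in> path_edges xs \<and>
            card (path_edges xs - marked_edges S m) = 1)}"

definition w_val :: "'v set \<Rightarrow> 'l set \<Rightarrow> ('v + 'l) set set \<Rightarrow> ('l \<Rightarrow> ('v + 'l)) \<Rightarrow> ('v + 'l) set \<Rightarrow> nat" where
  "w_val T S F m e = card (W_set T S F m e)"

definition c_val :: "'v set \<Rightarrow> 'l set \<Rightarrow> ('v + 'l) set set \<Rightarrow> ('v + 'l) \<Rightarrow> 'l \<Rightarrow> real" where
  "c_val T S F r l = (\<Sum>m\<in>markings T S F r. harm (w_val T S F m {Inr l, m l})) / real (card (markings T S F r))"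

definition Hhat :: "nat \<Rightarrow> real" where
  "Hhat i = (\<Sum>j. harm (i + j) / 2 ^ (j + 1))"

end

theory Submission
  imports Defs
begin

text \<open>
  Fix a Steiner node l and let P be the path from l up to the root. For a marking m, every
  terminal pair counted in w(m(l)) has exactly one unmarked edge f on its tree path; following
  marked edges downwards from the two ends of f recovers the pair, and f is incident to the
  marked run of l, the nodes reached from l by walking up P as long as each step is the marked
  child edge of the parent. Counting unmarked edges at the nodes of the run gives
  w(m(l)) \<le> d(l) - 1 + X, where every further node p of the run adds d(p) - 1 and the first
  unmarked parent edge adds 1.

  If the child of p on P is an admissible mark of p, then p has no terminal child, so p marks
  it with probability 1/d(p). Induction along P therefore gives E[H(k + X)] \<le> Hhat(k + 1),
  the induction step being Hhat(i + d - 1)/d + (1 - 1/d) H(i) \<le> Hhat(i), which follows from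
  Hhat(i) = H(i)/2 + Hhat(i + 1)/2 and the fact that Hhat(i) - H(i) is nonincreasing.
\<close>

section \<open>The sequence Hhat\<close>

lemma harm_le_of_nat: "harm n \<le> real n"
proof (induction n)
  case (Suc n)
  have "inverse (real (Suc n)) \<le> 1" by (simp add: inverse_le_1_iff)
  with Suc show ?case by (simp add: harm_Suc)
qed (simp add: harm_def)

lemma summable_affine_div_power2: "summable (\<lambda>j. (real n + real j) / 2 ^ (j + 1))"
proof (rule summable_ratio_test[where c = "3/4" and N = 2])
  fix j :: nat assume "2 \<le> j"
  then have "(real n + real (Suc j)) * 2 ^ j \<le> 3/2 * (real n + real j) * 2 ^ j"
    by (intro mult_right_mono) auto
  then show "norm ((real n + real (Suc j)) / 2 ^ (Suc j + 1))
      \<le> 3/4 * norm ((real n + real j) / 2 ^ (j + 1))"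
    by (simp add: field_simps)
qed simp

lemma summable_Hhat: "summable (\<lambda>j. harm (i + j) / 2 ^ (j + 1) :: real)"
proof (rule summable_comparison_test[OF _ summable_affine_div_power2[of i]])
  have "harm (i + j) \<le> real i + real j" for j using harm_le_of_nat[of "i + j"] by simp
  then show "\<exists>N. \<forall>j\<ge>N. norm (harm (i + j) / 2 ^ (j + 1) :: real) \<le> (real i + real j) / 2 ^ (j + 1)"
    by (auto simp: harm_nonneg divide_right_mono)
qed

lemma sums_div_power2: "(\<lambda>j. c / 2 ^ (j + 1) :: real) sums c"
  using sums_mult[OF power_half_series, of c] by (simp add: field_simps)

lemma Hhat_unfold: "Hhat i = harm i / 2 + Hhat (Suc i) / 2"
proof -
  have "Hhat i = (\<Sum>j. harm (i + Suc j) / 2 ^ (Suc j + 1)) + harm i / 2"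
    unfolding Hhat_def using suminf_split_head[OF summable_Hhat] by simp
  also have "(\<Sum>j. harm (i + Suc j) / 2 ^ (Suc j + 1)) = (\<Sum>j. harm (Suc i + j) / 2 ^ (j + 1) / 2)"
    by (simp add: field_simps)
  also have "\<dots> = Hhat (Suc i) / 2"
    unfolding Hhat_def using suminf_divide[OF summable_Hhat[of "Suc i"], of 2] by simp
  finally show ?thesis by simp
qed

lemma Hhat_minus_harm_sums:
  "(\<lambda>j. (harm (i + j) - harm i) / 2 ^ (j + 1)) sums (Hhat i - harm i)"
  using sums_diff[OF summable_sums[OF summable_Hhat[of i]] sums_div_power2[of "harm i"]]
  unfolding Hhat_def by (simp add: diff_divide_distrib)

lemma harm_le_Hhat: "harm i \<le> Hhat i"
  using sums_le[OF _ sums_zero Hhat_minus_harm_sums[of i]] by (simp add: harm_mono)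

lemma Hhat_nonneg: "0 \<le> Hhat i"
  using harm_nonneg harm_le_Hhat order_trans by blast

lemma harm_add_minus_harm: "harm (i + j) - harm i = (\<Sum>k<j. inverse (real (i + k + 1)) :: real)"
  by (induction j) (simp_all add: harm_Suc)

lemma harm_increment_antimono:
  "i \<le> i' \<Longrightarrow> harm (i' + j) - harm i' \<le> (harm (i + j) - harm i :: real)"
  unfolding harm_add_minus_harm by (intro sum_mono) (simp add: field_simps)

lemma Hhat_minus_harm_antimono: "i \<le> i' \<Longrightarrow> Hhat i' - harm i' \<le> Hhat i - harm i"
  by (intro sums_le[OF _ Hhat_minus_harm_sums Hhat_minus_harm_sums] divide_right_mono
      harm_increment_antimono) auto

lemma Hhat_add_minus_harm_le: "Hhat (i + j) - harm i \<le> real (Suc j) * (Hhat i - harm i)"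
proof (induction j)
  case (Suc j)
  have "Hhat (i + Suc j) - harm i = (Hhat (i + j) - harm i) + (Hhat (i + j) - harm (i + j))"
    using Hhat_unfold[of "i + j"] by simp
  also have "\<dots> \<le> real (Suc j) * (Hhat i - harm i) + (Hhat i - harm i)"
    using Suc Hhat_minus_harm_antimono[of i "i + j"] by simp
  finally show ?case by (simp add: algebra_simps)
qed simp

lemma Hhat_average_le:
  assumes "1 \<le> d"
  shows "Hhat (i + d - 1) / d + (1 - 1 / d) * harm i \<le> Hhat i"
proof -
  have "Hhat (i + d - 1) \<le> harm i + real d * (Hhat i - harm i)"
    using Hhat_add_minus_harm_le[of i "d - 1"] assms by simp
  then show ?thesis using assms by (simp add: field_simps)
qed

section \<open>Averaging over uniform markings\<close>

lemma sum_PiE_fiber: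
  fixes g :: "('a \<Rightarrow> 'b) \<Rightarrow> real"
  assumes fin: "finite S" "\<forall>l\<in>S. finite (C l)" and l: "l \<in> S" and u: "u \<in> C l"
    and inv: "\<And>m z. g (m(l := z)) = g m"
  shows "(\<Sum>m\<in>PiE S C. g m) = real (card (C l)) * (\<Sum>m\<in>{m\<in>PiE S C. m l = u}. g m)"
proof -
  let ?M = "PiE S C"
  have "(\<lambda>m. m l) ` ?M \<subseteq> C l" using l by auto
  then have "(\<Sum>m\<in>?M. g m) = (\<Sum>a\<in>C l. \<Sum>m\<in>{m\<in>?M. m l = a}. g m)"
    using sum.group[of ?M "C l" "\<lambda>m. m l" g] fin l by (simp add: finite_PiE)
  also have "\<dots> = (\<Sum>a\<in>C l. \<Sum>m\<in>{m\<in>?M. m l = u}. g m)"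
  proof (rule sum.cong[OF refl])
    fix a assume a: "a \<in> C l"
    show "(\<Sum>m\<in>{m\<in>?M. m l = a}. g m) = (\<Sum>m\<in>{m\<in>?M. m l = u}. g m)"
    proof (rule sum.reindex_bij_witness[where i = "\<lambda>m. m(l := a)" and j = "\<lambda>m. m(l := u)"])
      fix m assume "m \<in> {m\<in>?M. m l = a}"
      then show "(m(l := u))(l := a) = m" "m(l := u) \<in> {m\<in>?M. m l = u}" "g (m(l := u)) = g m"
        using u l inv by (auto simp: PiE_iff extensional_def)
    next
      fix m assume "m \<in> {m\<in>?M. m l = u}"
      then show "(m(l := a))(l := u) = m" "m(l := a) \<in> {m\<in>?M. m l = a}"
        using a l by (auto simp: PiE_iff extensional_def)
    qed
  qed
  finally show ?thesis by simp
qed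

lemma sum_PiE_if_coordinate:
  fixes g :: "('a \<Rightarrow> 'b) \<Rightarrow> real"
  assumes fin: "finite S" "\<forall>l\<in>S. finite (C l)" and l: "l \<in> S" and u: "u \<in> C l"
    and inv: "\<And>m z. g (m(l := z)) = g m"
  shows "(\<Sum>m\<in>PiE S C. if m l = u then g m else c) =
    (\<Sum>m\<in>PiE S C. g m) / card (C l) + (1 - 1 / card (C l)) * card (PiE S C) * c"
proof -
  let ?M = "PiE S C" and ?fib = "{m\<in>PiE S C. m l = u}" and ?d = "real (card (C l))"
  have finM: "finite ?M" using fin by (intro finite_PiE) auto
  have d: "0 < ?d" using fin l u by (auto simp: card_gt_0_iff)
  have fiber_g: "(\<Sum>m\<in>?M. g m) = ?d * (\<Sum>m\<in>?fib. g m)"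
    using sum_PiE_fiber[OF fin l u inv] .
  have fiber_card: "real (card ?M) = ?d * card ?fib"
    using sum_PiE_fiber[OF fin l u, of "\<lambda>_. 1"] by simp
  have card_rest: "real (card (?M - ?fib)) = real (card ?M) - real (card ?fib)"
    using finM by (auto simp: card_Diff_subset card_mono of_nat_diff)
  have "?M \<inter> {m. m l = u} = ?fib" "?M \<inter> - {m. m l = u} = ?M - ?fib" by auto
  then have "(\<Sum>m\<in>?M. if m l = u then g m else c) = (\<Sum>m\<in>?fib. g m) + card (?M - ?fib) * c"
    using sum.If_cases[OF finM, of "\<lambda>m. m l = u" g "\<lambda>_. c"] by simp
  also have "\<dots> = (\<Sum>m\<in>?M. g m) / ?d + (1 - 1 / ?d) * card ?M * c"
    using d unfolding card_rest fiber_g fiber_card by (simp add: field_simps)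
  finally show ?thesis .
qed

definition marks :: "('l \<Rightarrow> 'v + 'l) \<Rightarrow> 'v + 'l \<Rightarrow> 'v + 'l \<Rightarrow> bool" where
  "marks m p u \<longleftrightarrow> (\<exists>l. p = Inr l \<and> m l = u)"

text \<open>For P the path from a node up to the root, run_weight d m P bounds the unmarked edges at
  the nodes of the marked run other than the child edges of its first node: every further node p
  of the run contributes its d p - 1 unmarked child edges, and the parent edge at which the run
  stops contributes 1.\<close>
fun run_weight :: "('v + 'l \<Rightarrow> nat) \<Rightarrow> ('l \<Rightarrow> 'v + 'l) \<Rightarrow> ('v + 'l) list \<Rightarrow> nat" where
  "run_weight d m (u # p # rest) = (if marks m p u then d p - 1 + run_weight d m (p # rest) else 1)"
| "run_weight d m _ = 0"

lemma run_weight_fun_upd: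
  "Inr l \<notin> set rest \<Longrightarrow> run_weight d (m(l := z)) (p # rest) = run_weight d m (p # rest)"
  by (induction rest arbitrary: p) (auto simp: marks_def)

fun marked_run :: "('l \<Rightarrow> 'v + 'l) \<Rightarrow> ('v + 'l) list \<Rightarrow> ('v + 'l) set" where
  "marked_run m [] = {}"
| "marked_run m [u] = {u}"
| "marked_run m (u # p # rest) = insert u (if marks m p u then marked_run m (p # rest) else {})"

lemma hd_in_marked_run: "P \<noteq> [] \<Longrightarrow> hd P \<in> marked_run m P"
  by (induction m P rule: marked_run.induct) auto

text \<open>A sum over PiE S C divided by its cardinality is the expectation over independent uniform
  choices m l \<in> C l.\<close>
lemma sum_harm_run_weight_le:
  fixes S :: "'l set" and C :: "'l \<Rightarrow> ('v + 'l) set" and d :: "'v + 'l \<Rightarrow> nat"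
  assumes fin: "finite S" "\<forall>l\<in>S. finite (C l)"
    and "distinct P" "P \<noteq> []"
    and "\<And>i. Suc i < length P \<Longrightarrow>
      \<exists>l\<in>S. P ! Suc i = Inr l \<and> (P ! i \<in> C l \<longrightarrow> d (P ! Suc i) = card (C l))"
  shows "(\<Sum>m\<in>PiE S C. harm (k + run_weight d m P)) \<le> card (PiE S C) * Hhat (Suc k)"
  using assms(3-)
proof (induction P arbitrary: k rule: induct_list012)
  case (2 u)
  have "harm k \<le> (harm (Suc k) :: real)" by (simp add: harm_Suc)
  then have "harm k \<le> Hhat (Suc k)" using harm_le_Hhat[of "Suc k"] by linarith
  then show ?case by (simp add: mult_left_mono)
next
  case (3 u p rest)
  let ?M = "PiE S C"
  obtain l where l: "l \<in> S" "p = Inr l" and d: "u \<in> C l \<Longrightarrow> d p = card (C l)"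
    using "3.prems"(3)[of 0] by auto
  have IH: "(\<Sum>m\<in>?M. harm (k' + run_weight d m (p # rest))) \<le> card ?M * Hhat (Suc k')" for k'
    using "3.prems" by (intro "3.IH"(2)) (auto, metis Suc_less_eq length_Cons nth_Cons_Suc)
  have marks_iff: "marks m p u \<longleftrightarrow> m l = u" for m using l by (auto simp: marks_def)
  show ?case
  proof (cases "u \<in> C l")
    case False
    then have "\<And>m. m \<in> ?M \<Longrightarrow> run_weight d m (u # p # rest) = 1"
      using l marks_iff by (auto simp: PiE_iff)
    then show ?thesis using harm_le_Hhat[of "Suc k"] by (simp add: mult_left_mono)
  next
    case True
    let ?n = "card (C l)" and ?H = "harm (Suc k)"
    define g :: "('l \<Rightarrow> 'v + 'l) \<Rightarrow> real"
      where "g m = harm (k + (d p - 1) + run_weight d m (p # rest))" for m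
    have "Inr l \<notin> set rest" using "3.prems"(1) l by simp
    then have inv: "g (m(l := z)) = g m" for m z by (simp add: g_def run_weight_fun_upd)
    have "?n \<ge> 1" using True fin l by (auto simp: Suc_le_eq card_gt_0_iff)
    have "(\<Sum>m\<in>?M. harm (k + run_weight d m (u # p # rest))) = (\<Sum>m\<in>?M. if m l = u then g m else ?H)"
      by (intro sum.cong) (auto simp: marks_iff g_def add.assoc)
    also have "\<dots> = (\<Sum>m\<in>?M. g m) / ?n + (1 - 1 / ?n) * card ?M * ?H"
      by (rule sum_PiE_if_coordinate[OF fin l(1) True inv])
    also have "\<dots> \<le> card ?M * Hhat (Suc k + ?n - 1) / ?n + (1 - 1 / ?n) * card ?M * ?H"
      using IH[of "k + (d p - 1)"] d[OF True] \<open>?n \<ge> 1\<close> by (auto simp: g_def divide_right_mono)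
    also have "\<dots> = card ?M * (Hhat (Suc k + ?n - 1) / ?n + (1 - 1 / ?n) * ?H)"
      by (simp add: algebra_simps)
    also have "\<dots> \<le> card ?M * Hhat (Suc k)"
      using Hhat_average_le[OF \<open>?n \<ge> 1\<close>, of "Suc k"] by (intro mult_left_mono) auto
    finally show ?thesis .
  qed
qed simp

section \<open>Paths and rooted trees\<close>

lemma tpath_iff_successively:
  "tpath F xs \<longleftrightarrow> xs \<noteq> [] \<and> distinct xs \<and> successively (\<lambda>a b. {a, b} \<in> F) xs"
  unfolding tpath_def successively_conv_nth by auto

lemma tpath_appendD:
  "tpath F (xs @ ys) \<Longrightarrow> xs \<noteq> [] \<Longrightarrow> tpath F xs"
  "tpath F (xs @ ys) \<Longrightarrow> ys \<noteq> [] \<Longrightarrow> tpath F ys"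
  unfolding tpath_iff_successively successively_append_iff by auto

lemma tpath_snoc: "tpath F xs \<Longrightarrow> y \<notin> set xs \<Longrightarrow> {last xs, y} \<in> F \<Longrightarrow> tpath F (xs @ [y])"
  unfolding tpath_iff_successively by (auto simp: successively_append_iff)

lemma path_edges_Nil [simp]: "path_edges [] = {}"
  and path_edges_singleton [simp]: "path_edges [x] = {}"
  by (simp_all add: path_edges_def)

lemma path_edges_Cons_Cons [simp]:
  "path_edges (x # y # zs) = insert {x, y} (path_edges (y # zs))"
proof -
  have "{i. Suc i < length (x # y # zs)} = insert 0 (Suc ` {i. Suc i < length (y # zs)})"
    by (auto simp: image_iff) (metis Suc_less_eq less_Suc_eq_0_disj)
  then show ?thesis
    unfolding path_edges_def by (auto simp: setcompr_eq_image image_image)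
qed

lemma path_edges_append:
  "path_edges (xs @ y # ys) = path_edges (xs @ [y]) \<union> path_edges (y # ys)"
  by (induction xs rule: induct_list012) auto

lemma path_edges_snoc_snoc: "path_edges (xs @ [y, z]) = insert {y, z} (path_edges (xs @ [y]))"
  by (induction xs rule: induct_list012) auto

lemma path_edges_rev [simp]: "path_edges (rev xs) = path_edges xs"
  by (induction xs rule: induct_list012) (auto simp: path_edges_snoc_snoc insert_commute)

lemma path_edges_subset_set: "e \<in> path_edges xs \<Longrightarrow> e \<subseteq> set xs"
  unfolding path_edges_def by auto

lemma tpath_iff_path_edges: "tpath F xs \<longleftrightarrow> xs \<noteq> [] \<and> distinct xs \<and> path_edges xs \<subseteq> F"
  unfolding tpath_def path_edges_def by auto

lemma path_edges_split: "e \<in> path_edges xs \<Longrightarrow> \<exists>as u v bs. xs = as @ u # v # bs \<and> e = {u, v}"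
proof (induction xs rule: induct_list012)
  case (3 x y zs)
  show ?case
  proof (cases "e = {x, y}")
    case False
    then obtain as u v bs where "y # zs = as @ u # v # bs" "e = {u, v}" using 3 by auto
    then show ?thesis by (metis append_Cons)
  qed (metis append_Nil)
qed simp_all

definition cycle_free :: "'a set set \<Rightarrow> bool" where
  "cycle_free F \<longleftrightarrow> \<not> (\<exists>xs. 3 \<le> length xs \<and> tpath F xs \<and> {last xs, hd xs} \<in> F)"

text \<open>Two paths leaving x through different edges close a cycle at their first common node.\<close>
lemma cycle_free_tpath_fork_disjoint:
  assumes F: "cycle_free F" and xs: "tpath F (x # xs)" and ys: "tpath F (x # ys)"
    and ne: "xs \<noteq> []" "ys \<noteq> []" and hd: "hd xs \<noteq> hd ys"
  shows "set xs \<inter> set ys = {}"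
proof (rule ccontr)
  let ?E = "\<lambda>a b. {a, b} \<in> F"
  assume "set xs \<inter> set ys \<noteq> {}"
  then obtain as z zs where xs_split: "xs = as @ z # zs" and "z \<in> set ys"
    and as: "\<forall>a\<in>set as. a \<notin> set ys"
    using split_list_first_propE[of xs "\<lambda>z. z \<in> set ys"] by blast
  then obtain bs cs where ys_split: "ys = bs @ z # cs" by (blast dest: split_list)
  define cyc where "cyc = (x # as @ [z]) @ rev bs"
  have "distinct (x # as @ z # zs)" "distinct (x # bs @ z # cs)"
    using xs ys xs_split ys_split unfolding tpath_def by auto
  then have "distinct cyc" using as ys_split unfolding cyc_def by auto
  have "successively ?E (((x # as @ [z]) @ zs))" "successively ?E ((x # bs) @ z # cs)"
    using xs ys xs_split ys_split unfolding tpath_iff_successively by auto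
  then have "successively ?E (x # as @ [z])" "successively ?E bs"
    and "bs \<noteq> [] \<Longrightarrow> ?E (last bs) z"
    unfolding successively_append_iff by (auto simp: last_ConsR successively_Cons)
  then have "successively ?E cyc"
    unfolding cyc_def successively_append_iff
    by (auto simp: hd_rev insert_commute intro: successively_mono)
  with \<open>distinct cyc\<close> have "tpath F cyc" unfolding tpath_iff_successively cyc_def by simp
  moreover have "3 \<le> length cyc"
    using hd xs_split ys_split unfolding cyc_def by (cases as; cases bs) auto
  moreover have "{last cyc, hd cyc} \<in> F"
  proof -
    have "{x, hd ys} \<in> F" using ys ne unfolding tpath_iff_successively by (cases ys) auto
    then show ?thesis
      using ys_split unfolding cyc_def by (cases bs) (auto simp: last_rev insert_commute)
  qed
  ultimately show False using F unfolding cycle_free_def by blast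
qed

lemma cycle_free_tpath_unique:
  assumes F: "cycle_free F"
  shows "tpath F xs \<Longrightarrow> tpath F ys \<Longrightarrow> hd xs = hd ys \<Longrightarrow> last xs = last ys \<Longrightarrow> xs = ys"
proof (induction xs arbitrary: ys)
  case (Cons x xs)
  then obtain ys' where ys: "ys = x # ys'" unfolding tpath_def by (cases ys) auto
  have "x \<notin> set xs" "x \<notin> set ys'" using Cons.prems ys unfolding tpath_def by auto
  then have "xs = [] \<longleftrightarrow> ys' = []" using Cons.prems(4) ys by (metis last_ConsL last_ConsR last_in_set)
  moreover have "xs = ys'" if "xs \<noteq> []" "ys' \<noteq> []"
  proof -
    have "last xs = last ys'" using Cons.prems(4) ys that by simp
    then have "set xs \<inter> set ys' \<noteq> {}" using that by (metis disjoint_iff last_in_set)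
    then have "hd xs = hd ys'"
      using cycle_free_tpath_fork_disjoint[OF F Cons.prems(1) _ that] Cons.prems(2) ys by blast
    then show ?thesis
      using Cons.IH[of ys'] Cons.prems ys that \<open>last xs = last ys'\<close>
      by (metis tpath_appendD(2) append_Cons append_Nil)
  qed
  ultimately show ?case using ys by (cases "xs = []") auto
qed (simp add: tpath_def)

fun parent_chain :: "'a set set \<Rightarrow> 'a \<Rightarrow> 'a list \<Rightarrow> bool" where
  "parent_chain F r [] = False"
| "parent_chain F r [u] = (u = r)"
| "parent_chain F r (u # p # rest) =
    (u \<in> children F r p \<and> u \<notin> set (p # rest) \<and> parent_chain F r (p # rest))"

lemma parent_chain_rev_tpath: "tpath F xs \<Longrightarrow> hd xs = r \<Longrightarrow> parent_chain F r (rev xs)"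
proof (induction xs rule: rev_induct)
  case (snoc y ys)
  show ?case
  proof (cases ys rule: rev_cases)
    case (snoc zs z)
    have "tpath F ys" using tpath_appendD(1)[OF snoc.prems(1)] \<open>ys = zs @ [z]\<close> by simp
    moreover have "hd ys = r" using snoc.prems \<open>ys = zs @ [z]\<close> by (cases zs) auto
    moreover have "y \<in> children F r z"
      unfolding children_def using snoc.prems \<open>ys = zs @ [z]\<close> by (intro CollectI exI[of _ zs]) auto
    moreover have "y \<notin> set ys" using snoc.prems(1) unfolding tpath_def by simp
    ultimately show ?thesis using snoc.IH \<open>ys = zs @ [z]\<close> by simp
  qed (use snoc in simp)
qed (simp add: tpath_def)

lemma parent_chain_distinct: "parent_chain F r P \<Longrightarrow> distinct P"
  by (induction P rule: induct_list012) auto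

lemma parent_chain_nth:
  "parent_chain F r P \<Longrightarrow> Suc i < length P \<Longrightarrow> P ! i \<in> children F r (P ! Suc i)"
  by (induction P arbitrary: i rule: induct_list012) (auto simp: less_Suc_eq_0_disj)

locale rooted_tree =
  fixes N :: "'a set" and F :: "'a set set" and r :: 'a
  assumes tree: "is_tree N F" and root_in: "r \<in> N"
begin

lemma cycle_free: "cycle_free F"
  using tree unfolding is_tree_def cycle_free_def by blast

lemma finite_nodes: "finite N"
  using tree unfolding is_tree_def by blast

lemma edge_subset: "e \<in> F \<Longrightarrow> e \<subseteq> N \<and> card e = 2"
  using tree unfolding is_tree_def by blast

lemma finite_edges: "finite F"
  using edge_subset finite_nodes by (metis Pow_iff finite_Pow_iff rev_finite_subset subsetI)

lemma root_path_exists: "x \<in> N \<Longrightarrow> \<exists>xs. tpath F xs \<and> hd xs = r \<and> last xs = x"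
  using tree root_in unfolding is_tree_def by blast

lemma children_edge: "y \<in> children F r x \<Longrightarrow> {x, y} \<in> F"
  unfolding children_def tpath_iff_successively by (auto simp: successively_append_iff)

lemma children_subset: "y \<in> children F r x \<Longrightarrow> x \<in> N \<and> y \<in> N"
  using children_edge edge_subset by blast

lemma finite_children: "finite (children F r x)"
  using children_subset finite_nodes by (meson rev_finite_subset subsetI)

lemma root_not_child: "r \<notin> children F r x"
  unfolding children_def tpath_def by (auto simp: hd_append split: if_splits)

lemma parent_unique: "y \<in> children F r x \<Longrightarrow> y \<in> children F r x' \<Longrightarrow> x = x'"
proof -
  assume "y \<in> children F r x" "y \<in> children F r x'"
  then obtain xs xs' where "tpath F (xs @ [x, y])" "hd (xs @ [x, y]) = r"
    "tpath F (xs' @ [x', y])" "hd (xs' @ [x', y]) = r"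
    unfolding children_def by blast
  then have "xs @ [x, y] = xs' @ [x', y]" using cycle_free_tpath_unique[OF cycle_free] by simp
  then show "x = x'" by simp
qed

lemma edge_parent_or_child:
  assumes e: "{x, y} \<in> F"
  shows "y \<in> children F r x \<or> x \<in> children F r y"
proof -
  have "x \<in> N" "x \<noteq> y" using edge_subset[OF e] by (auto simp: card_2_iff)
  then obtain xs where xs: "tpath F xs" "hd xs = r" "last xs = x" using root_path_exists by blast
  then obtain ys where ys: "xs = ys @ [x]" unfolding tpath_def by (metis append_butlast_last_id)
  show ?thesis
  proof (cases "y \<in> set xs")
    case False
    then have "tpath F (ys @ [x, y])" "hd (ys @ [x, y]) = r"
      using tpath_snoc[OF xs(1) False] xs e ys by (auto simp: hd_append)
    then show ?thesis unfolding children_def by blast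
  next
    case True
    then obtain as bs where xs_split: "xs = as @ y # bs" by (blast dest: split_list)
    then have "bs \<noteq> []" using xs(3) \<open>x \<noteq> y\<close> by auto
    show ?thesis
    proof (cases "bs = [x]")
      case True
      then show ?thesis unfolding children_def using xs xs_split by blast
    next
      case False
      have "last (y # bs) = x" using \<open>bs \<noteq> []\<close> xs(3) xs_split by simp
      moreover have "3 \<le> length (y # bs)"
        using False \<open>bs \<noteq> []\<close> calculation by (cases bs; cases "tl bs") auto
      moreover have "tpath F (y # bs)" using tpath_appendD(2) xs(1) xs_split by blast
      ultimately show ?thesis using cycle_free e unfolding cycle_free_def
        by (metis insert_commute list.sel(1))
    qed
  qed
qed

lemma parent_chain_exists: "x \<in> N \<Longrightarrow> \<exists>P. parent_chain F r P \<and> hd P = x"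
  using root_path_exists parent_chain_rev_tpath
  by (metis hd_rev tpath_def)

end

section \<open>Descending along marked edges\<close>

definition marked_descent :: "'l set \<Rightarrow> ('l \<Rightarrow> 'v + 'l) \<Rightarrow> ('v + 'l) list \<Rightarrow> bool" where
  "marked_descent S m ys \<longleftrightarrow> ys \<noteq> [] \<and> successively (\<lambda>x y. \<exists>l\<in>S. x = Inr l \<and> y = m l) ys \<and>
     (\<exists>t. last ys = Inl t)"

lemma marked_descent_Cons: "marked_descent S m (y # ys) \<longleftrightarrow>
   (if ys = [] then (\<exists>t. y = Inl t) else (\<exists>l\<in>S. y = Inr l \<and> hd ys = m l) \<and> marked_descent S m ys)"
  by (cases ys) (auto simp: marked_descent_def)

lemma marked_descent_unique:
  "marked_descent S m xs \<Longrightarrow> marked_descent S m ys \<Longrightarrow> hd xs = hd ys \<Longrightarrow> xs = ys"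
proof (induction xs arbitrary: ys)
  case (Cons x xs)
  then obtain ys' where ys: "ys = x # ys'" by (cases ys) (auto simp: marked_descent_def)
  then have "xs = [] \<longleftrightarrow> ys' = []"
    using Cons.prems by (auto simp: marked_descent_Cons split: if_splits)
  moreover have "xs = ys'" if "xs \<noteq> []" "ys' \<noteq> []"
    using that Cons.prems ys by (intro Cons.IH) (auto simp: marked_descent_Cons)
  ultimately show ?case using ys by (cases "xs = []") auto
qed (simp add: marked_descent_def)

text \<open>Meaningful only if some marked descent starts at x; otherwise THE yields an arbitrary list.\<close>
definition marked_leaf :: "'l set \<Rightarrow> ('l \<Rightarrow> 'v + 'l) \<Rightarrow> 'v + 'l \<Rightarrow> 'v + 'l" where
  "marked_leaf S m x = last (THE ys. marked_descent S m ys \<and> hd ys = x)"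

lemma marked_leaf_eq: "marked_descent S m ys \<Longrightarrow> marked_leaf S m (hd ys) = last ys"
  unfolding marked_leaf_def using marked_descent_unique
  by (metis (mono_tags, lifting) the_equality)

text \<open>Every Steiner node has a single marked child edge, so a distinct path all of whose edges are
  marked and which ends in a terminal must run downwards along them.\<close>
lemma marked_descentI:
  assumes "distinct ys" "ys \<noteq> []" "last ys = Inl t" "path_edges ys \<subseteq> marked_edges S m"
  shows "marked_descent S m ys"
  using assms
proof (induction ys rule: induct_list012)
  case (3 x y zs)
  then have IH: "marked_descent S m (y # zs)" by simp
  obtain l where "l \<in> S" "{x, y} = {Inr l, m l}"
    using "3.prems"(4) unfolding marked_edges_def by auto
  then consider "x = Inr l" "y = m l" | "y = Inr l" "x = m l" by (auto simp: doubleton_eq_iff)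
  then show ?case
  proof cases
    case 2
    have "zs \<noteq> []" using "3.prems"(3) 2 by auto
    then have "x = hd zs" using IH 2 by (auto simp: marked_descent_Cons)
    then show ?thesis using "3.prems"(1) \<open>zs \<noteq> []\<close> by simp
  qed (use IH \<open>l \<in> S\<close> in \<open>simp add: marked_descent_Cons\<close>)
qed (auto simp: marked_descent_def)

lemma tpath_split_at_unmarked_edge:
  assumes xs: "tpath F xs" "hd xs = Inl a" "last xs = Inl b"
    and f: "path_edges xs - marked_edges S m = {f}"
  obtains as u v bs where "xs = as @ u # v # bs" "f = {u, v}"
    "path_edges xs = insert f (path_edges (u # rev as) \<union> path_edges (v # bs))"
    "marked_descent S m (u # rev as)" "last (u # rev as) = Inl a"
    "marked_descent S m (v # bs)" "last (v # bs) = Inl b"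
proof -
  have "f \<in> path_edges xs" using f by blast
  then obtain as u v bs where split: "xs = as @ u # v # bs" "f = {u, v}"
    using path_edges_split by metis
  have distinct: "distinct (as @ u # v # bs)" using xs(1) split unfolding tpath_def by simp
  have edges: "path_edges xs = insert f (path_edges (u # rev as) \<union> path_edges (v # bs))"
    using split path_edges_append[of as u "v # bs"] path_edges_rev[of "as @ [u]"] by auto
  have "v \<notin> set (as @ [u])" "u \<notin> set (v # bs)" using distinct by auto
  then have "f \<notin> path_edges (as @ [u])" "f \<notin> path_edges (v # bs)"
    using path_edges_subset_set split(2) by blast+
  then have "path_edges (u # rev as) \<subseteq> marked_edges S m" "path_edges (v # bs) \<subseteq> marked_edges S m"
    using f edges path_edges_rev[of "as @ [u]"] by auto
  moreover have "last (u # rev as) = Inl a" "last (v # bs) = Inl b"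
    using xs(2,3) split(1) by (cases as; simp)+
  ultimately have "marked_descent S m (u # rev as)" "marked_descent S m (v # bs)"
    using distinct by (auto intro!: marked_descentI)
  then show ?thesis using that split edges \<open>last (u # rev as) = Inl a\<close> \<open>last (v # bs) = Inl b\<close>
    by blast
qed

section \<open>Steiner trees whose terminals are leaves\<close>

definition unmarked_edges_at ::
  "('v + 'l) set set \<Rightarrow> 'l set \<Rightarrow> ('l \<Rightarrow> 'v + 'l) \<Rightarrow> 'v + 'l \<Rightarrow> ('v + 'l) set set" where
  "unmarked_edges_at F S m u = {f \<in> F - marked_edges S m. u \<in> f}"

lemma mark_candidates_subset: "mark_candidates T F r l \<subseteq> children F r (Inr l)"
  unfolding mark_candidates_def by auto

lemma mark_candidates_eq_children:
  "x \<in> mark_candidates T F r l \<Longrightarrow> x \<notin> Inl ` T \<Longrightarrow> mark_candidates T F r l = children F r (Inr l)"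
  unfolding mark_candidates_def by (auto split: if_splits)

locale leaf_terminal_tree = rooted_tree N F "Inr r"
  for N :: "('v + 'l) set" and F :: "('v + 'l) set set" and r :: 'l +
  fixes T :: "'v set" and S :: "'l set"
  assumes nodes_eq: "N = Inl ` T \<union> Inr ` S"
    and terminal_degree: "\<forall>t\<in>T. card {e\<in>F. Inl t \<in> e} = 1"
begin

lemma finite_Steiner: "finite S"
  using finite_nodes nodes_eq by (simp add: finite_image_iff)

lemma terminal_no_child: "y \<notin> children F (Inr r) (Inl t)"
proof
  assume y: "y \<in> children F (Inr r) (Inl t)"
  then obtain xs where p: "tpath F (xs @ [Inl t, y])" "hd (xs @ [Inl t, y]) = Inr r"
    unfolding children_def by blast
  then have "xs \<noteq> []" by auto
  then have "{last xs, Inl t} \<in> F" "{Inl t, y} \<in> F"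
    using p(1) unfolding tpath_iff_successively by (auto simp: successively_append_iff)
  moreover have "t \<in> T" using children_subset[OF y] nodes_eq by auto
  then obtain e where "{e \<in> F. Inl t \<in> e} = {e}"
    using terminal_degree by (meson card_1_singletonE)
  ultimately have "{last xs, Inl t} = {Inl t, y}"
    by (metis (no_types, lifting) insertI1 insert_commute mem_Collect_eq singletonD)
  then have "y = last xs \<or> y = Inl t" by (auto simp: doubleton_eq_iff)
  moreover have "distinct (xs @ [Inl t, y])" using p(1) unfolding tpath_def by blast
  ultimately show False using \<open>xs \<noteq> []\<close> by auto
qed

lemma parent_Steiner: "y \<in> children F (Inr r) x \<Longrightarrow> x \<in> Inr ` S"
  using children_subset nodes_eq terminal_no_child by blast

lemma parent_chain_Steiner: "parent_chain F (Inr r) P \<Longrightarrow> hd P \<in> Inr ` S \<Longrightarrow> set P \<subseteq> Inr ` S"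
proof (induction P rule: induct_list012)
  case (3 u p rest)
  then show ?case using parent_Steiner[of u p] by simp
qed simp_all

lemma incident_edge_parent_or_child: "f \<in> F \<Longrightarrow> u \<in> f \<Longrightarrow>
    \<exists>v. f = {u, v} \<and> (v \<in> children F (Inr r) u \<or> u \<in> children F (Inr r) v)"
proof -
  assume "f \<in> F" "u \<in> f"
  then obtain v where "f = {u, v}"
    using edge_subset[of f] by (auto simp: card_2_iff doubleton_eq_iff)
  then show ?thesis using edge_parent_or_child \<open>f \<in> F\<close> by blast
qed

lemma marked_run_closed_under_marking_parent:
  assumes m: "\<forall>l\<in>S. m l \<in> children F (Inr r) (Inr l)"
  shows "parent_chain F (Inr r) P \<Longrightarrow> m l \<in> marked_run m P \<Longrightarrow> l \<in> S \<Longrightarrow> Inr l \<in> marked_run m P"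
proof (induction P rule: induct_list012)
  case (2 u)
  then show ?case using m root_not_child by auto
next
  case (3 u p rest)
  show ?case
  proof (cases "m l = u")
    case True
    then have "p = Inr l" using "3.prems" m parent_unique by auto
    then show ?thesis using True hd_in_marked_run[of "p # rest" m] by (simp add: marks_def)
  next
    case False
    then show ?thesis using "3.IH"(2) "3.prems" by (auto split: if_splits)
  qed
qed simp

lemma marked_descent_hd_in_marked_run:
  assumes m: "\<forall>l\<in>S. m l \<in> children F (Inr r) (Inr l)"
    and P: "parent_chain F (Inr r) P" "hd P = Inr l0"
  shows "marked_descent S m ys \<Longrightarrow> Inr l0 \<in> set ys \<Longrightarrow> hd ys \<in> marked_run m P"
proof (induction ys)
  case (Cons y ys)
  show ?case
  proof (cases "y = Inr l0")
    case True
    then show ?thesis using hd_in_marked_run[of P m] P by (cases P) auto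
  next
    case False
    then have "ys \<noteq> []" using Cons.prems by auto
    then obtain l where "l \<in> S" "y = Inr l" "hd ys = m l" "marked_descent S m ys"
      using Cons.prems(1) by (auto simp: marked_descent_Cons)
    then show ?thesis
      using Cons.IH Cons.prems False marked_run_closed_under_marking_parent[OF m P(1)] by simp
  qed
qed simp

lemma card_unmarked_edges_at_le:
  assumes m: "\<forall>l\<in>S. m l \<in> children F (Inr r) (Inr l)" and l: "l \<in> S"
    and parent: "l = r \<or> Inr l \<in> children F (Inr r) p"
  shows "card (unmarked_edges_at F S m (Inr l)) \<le>
    card (children F (Inr r) (Inr l)) - 1 + (if l = r \<or> marks m p (Inr l) then 0 else 1)"
proof -
  let ?C = "children F (Inr r) (Inr l)"
  define up where "up = (if l = r \<or> marks m p (Inr l) then {} else {{Inr l, p}})"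
  have "m l \<in> ?C" using m l by simp
  have marked: "{Inr l, m l} \<in> marked_edges S m" unfolding marked_edges_def using l by blast
  have "unmarked_edges_at F S m (Inr l) \<subseteq> (\<lambda>c. {Inr l, c}) ` (?C - {m l}) \<union> up"
  proof
    fix f assume "f \<in> unmarked_edges_at F S m (Inr l)"
    then have f: "f \<in> F" "f \<notin> marked_edges S m" "Inr l \<in> f" unfolding unmarked_edges_at_def by auto
    then obtain v where v: "f = {Inr l, v}" "v \<in> ?C \<or> Inr l \<in> children F (Inr r) v"
      using incident_edge_parent_or_child by blast
    show "f \<in> (\<lambda>c. {Inr l, c}) ` (?C - {m l}) \<union> up"
    proof (cases "v \<in> ?C")
      case True
      then show ?thesis using f(2) marked v by blast
    next
      case False
      then have child: "Inr l \<in> children F (Inr r) v" using v by blast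
      then have "l \<noteq> r" using root_not_child by blast
      then have "v = p" using child parent parent_unique by blast
      moreover have "\<not> marks m p (Inr l)"
      proof
        assume "marks m p (Inr l)"
        then obtain l' where "p = Inr l'" "m l' = Inr l" unfolding marks_def by blast
        moreover have "l' \<in> S" using child \<open>v = p\<close> \<open>p = Inr l'\<close> parent_Steiner by blast
        ultimately have "f \<in> marked_edges S m" using v \<open>v = p\<close> unfolding marked_edges_def
          by (auto simp: insert_commute)
        then show False using f(2) by blast
      qed
      ultimately show ?thesis using v \<open>l \<noteq> r\<close> unfolding up_def by simp
    qed
  qed
  then have "card (unmarked_edges_at F S m (Inr l)) \<le> card ((\<lambda>c. {Inr l, c}) ` (?C - {m l}) \<union> up)"
    using finite_children unfolding up_def by (intro card_mono) auto
  also have "\<dots> \<le> card ((\<lambda>c. {Inr l, c}) ` (?C - {m l})) + card up" by (rule card_Un_le)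
  also have "card ((\<lambda>c. {Inr l, c}) ` (?C - {m l})) \<le> card (?C - {m l})"
    using finite_children by (intro card_image_le) simp
  also have "card (?C - {m l}) = card ?C - 1" using \<open>m l \<in> ?C\<close> finite_children by simp
  finally show ?thesis unfolding up_def by (cases "l = r \<or> marks m p (Inr l)") simp_all
qed

lemma card_unmarked_along_run_le:
  assumes m: "\<forall>l\<in>S. m l \<in> children F (Inr r) (Inr l)"
  shows "parent_chain F (Inr r) P \<Longrightarrow> hd P \<in> Inr ` S \<Longrightarrow>
    card (\<Union>y\<in>marked_run m P. unmarked_edges_at F S m y)
      \<le> card (children F (Inr r) (hd P)) - 1 + run_weight (\<lambda>x. card (children F (Inr r) x)) m P"
proof (induction P rule: induct_list012)
  case (2 u)
  then show ?case using card_unmarked_edges_at_le[OF m, of r] by auto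
next
  case (3 u p rest)
  let ?d = "\<lambda>x. card (children F (Inr r) x)" and ?U = "unmarked_edges_at F S m"
  obtain l where l: "l \<in> S" "u = Inr l" using "3.prems" by auto
  have child: "u \<in> children F (Inr r) p" using "3.prems" by simp
  then have "l \<noteq> r" using root_not_child l by blast
  have u: "card (?U u) \<le> ?d u - 1 + (if marks m p u then 0 else 1)"
    using card_unmarked_edges_at_le[OF m l(1), of p] child l \<open>l \<noteq> r\<close> by simp
  show ?case
  proof (cases "marks m p u")
    case True
    have "card (\<Union>y\<in>marked_run m (p # rest). ?U y) \<le> ?d p - 1 + run_weight ?d m (p # rest)"
      using "3.IH"(2) "3.prems" parent_Steiner[OF child] by simp
    moreover have "card (\<Union>y\<in>marked_run m (u # p # rest). ?U y)
        \<le> card (?U u) + card (\<Union>y\<in>marked_run m (p # rest). ?U y)"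
      using True card_Un_le by simp
    ultimately show ?thesis using u True by simp
  next
    case False
    then show ?thesis using u by simp
  qed
qed simp

text \<open>A pair in W(m(l0)) is determined by the unmarked edge on its path, whose ends lead down to
  the two terminals along marked edges; that edge is incident to the marked run because the path
  also contains the marked edge below l0.\<close>
lemma card_W_set_le:
  assumes m: "\<forall>l\<in>S. m l \<in> children F (Inr r) (Inr l)" and l0: "l0 \<in> S"
    and P: "parent_chain F (Inr r) P" "hd P = Inr l0"
  shows "card (W_set T S F m {Inr l0, m l0}) \<le> card (\<Union>y\<in>marked_run m P. unmarked_edges_at F S m y)"
proof -
  let ?B = "\<Union>y\<in>marked_run m P. unmarked_edges_at F S m y"
  have "finite ?B"
    using finite_edges by (rule rev_finite_subset) (auto simp: unmarked_edges_at_def)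
  have "W_set T S F m {Inr l0, m l0} \<subseteq> (\<lambda>f. Inl -` marked_leaf S m ` f) ` ?B"
  proof
    fix pr assume "pr \<in> W_set T S F m {Inr l0, m l0}"
    then obtain a b xs where pr: "pr = {a, b}"
      and xs: "tpath F xs" "hd xs = Inl a" "last xs = Inl b"
      and e: "{Inr l0, m l0} \<in> path_edges xs" and "card (path_edges xs - marked_edges S m) = 1"
      unfolding W_set_def by blast
    then obtain f where f: "path_edges xs - marked_edges S m = {f}" by (meson card_1_singletonE)
    then obtain as u v bs where split: "xs = as @ u # v # bs" "f = {u, v}"
      "path_edges xs = insert f (path_edges (u # rev as) \<union> path_edges (v # bs))"
      "marked_descent S m (u # rev as)" "last (u # rev as) = Inl a"
      "marked_descent S m (v # bs)" "last (v # bs) = Inl b"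
      by (rule tpath_split_at_unmarked_edge[OF xs])
    have "marked_leaf S m u = Inl a" "marked_leaf S m v = Inl b"
      using marked_leaf_eq[OF split(4)] marked_leaf_eq[OF split(6)] split(5,7) by simp_all
    then have pr_eq: "pr = Inl -` marked_leaf S m ` f" using pr split(2) by auto
    have "{Inr l0, m l0} \<in> marked_edges S m" unfolding marked_edges_def using l0 by blast
    moreover have "f \<notin> marked_edges S m" using f by blast
    ultimately have "{Inr l0, m l0} \<noteq> f" by blast
    then have "{Inr l0, m l0} \<in> path_edges (u # rev as) \<union> path_edges (v # bs)"
      using e unfolding split(3) by blast
    then have "Inr l0 \<in> set (u # rev as) \<or> Inr l0 \<in> set (v # bs)"
      using path_edges_subset_set[of "{Inr l0, m l0}"] by blast
    then have "u \<in> marked_run m P \<or> v \<in> marked_run m P"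
      using marked_descent_hd_in_marked_run[OF m P split(4)]
        marked_descent_hd_in_marked_run[OF m P split(6)] by auto
    moreover have "f \<in> F" using f xs(1) unfolding tpath_iff_path_edges by blast
    ultimately have "f \<in> ?B"
      using split(2) \<open>f \<notin> marked_edges S m\<close> unfolding unmarked_edges_at_def by blast
    then show "pr \<in> (\<lambda>f. Inl -` marked_leaf S m ` f) ` ?B" using pr_eq by blast
  qed
  then have "card (W_set T S F m {Inr l0, m l0}) \<le> card ((\<lambda>f. Inl -` marked_leaf S m ` f) ` ?B)"
    using \<open>finite ?B\<close> by (intro card_mono) auto
  also have "\<dots> \<le> card ?B" using \<open>finite ?B\<close> by (rule card_image_le)
  finally show ?thesis .
qed

lemma w_val_le_run_weight:
  assumes m: "\<forall>l\<in>S. m l \<in> children F (Inr r) (Inr l)" and l0: "l0 \<in> S"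
    and P: "parent_chain F (Inr r) P" "hd P = Inr l0"
  shows "w_val T S F m {Inr l0, m l0}
    \<le> card (children F (Inr r) (Inr l0)) - 1 + run_weight (\<lambda>x. card (children F (Inr r) x)) m P"
  unfolding w_val_def
  using order_trans[OF card_W_set_le[OF assms] card_unmarked_along_run_le[OF m P(1)]] P(2) l0
  by simp

lemma parent_chain_mark_candidates:
  assumes P: "parent_chain F (Inr r) P" "hd P \<in> Inr ` S" and i: "Suc i < length P"
  shows "\<exists>l\<in>S. P ! Suc i = Inr l \<and> (P ! i \<in> mark_candidates T F (Inr r) l \<longrightarrow>
    card (children F (Inr r) (P ! Suc i)) = card (mark_candidates T F (Inr r) l))"
proof -
  have "P ! i \<in> children F (Inr r) (P ! Suc i)" using parent_chain_nth[OF P(1) i] .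
  then obtain l where "l \<in> S" "P ! Suc i = Inr l" using parent_Steiner by blast
  moreover have "P ! i \<in> set P" using i by simp
  then have "P ! i \<notin> Inl ` T" using parent_chain_Steiner[OF P] by auto
  ultimately show ?thesis using mark_candidates_eq_children by metis
qed

lemma c_val_le_Hhat:
  assumes l0: "l0 \<in> S"
  shows "c_val T S F (Inr r) l0 \<le> Hhat (card (children F (Inr r) (Inr l0)))"
proof (cases "markings T S F (Inr r) = {}")
  case True
  then show ?thesis unfolding c_val_def using Hhat_nonneg by simp
next
  case False
  let ?d = "\<lambda>x. card (children F (Inr r) x)" and ?M = "markings T S F (Inr r)"
  have M: "?M = PiE S (mark_candidates T F (Inr r))" unfolding markings_def ..
  have fin: "finite S" "\<forall>l\<in>S. finite (mark_candidates T F (Inr r) l)"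
    using finite_Steiner rev_finite_subset[OF finite_children mark_candidates_subset] by auto
  have m: "\<forall>l\<in>S. m l \<in> children F (Inr r) (Inr l)" if "m \<in> ?M" for m
    using that mark_candidates_subset unfolding M by (meson PiE_mem subsetD)
  obtain m0 where "m0 \<in> ?M" using False by blast
  then have "children F (Inr r) (Inr l0) \<noteq> {}" using m l0 by blast
  then have d: "Suc (?d (Inr l0) - 1) = ?d (Inr l0)"
    using finite_children[of "Inr l0"] by (simp add: card_gt_0_iff)
  obtain P where P: "parent_chain F (Inr r) P" "hd P = Inr l0"
    using parent_chain_exists l0 nodes_eq by blast
  then have "P \<noteq> []" by (cases P) auto
  have "hd P \<in> Inr ` S" using P(2) l0 by simp
  have "(\<Sum>m\<in>?M. harm (w_val T S F m {Inr l0, m l0}))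
      \<le> (\<Sum>m\<in>?M. harm (?d (Inr l0) - 1 + run_weight ?d m P) :: real)"
    using w_val_le_run_weight[OF m l0 P] by (intro sum_mono harm_mono) auto
  also have "\<dots> \<le> card ?M * Hhat (Suc (?d (Inr l0) - 1))"
    unfolding M
    by (rule sum_harm_run_weight_le[OF fin parent_chain_distinct[OF P(1)] \<open>P \<noteq> []\<close>])
      (rule parent_chain_mark_candidates[OF P(1) \<open>hd P \<in> Inr ` S\<close>])
  also have "\<dots> = card ?M * Hhat (?d (Inr l0))" unfolding d ..
  finally have "(\<Sum>m\<in>?M. harm (w_val T S F m {Inr l0, m l0})) \<le> card ?M * Hhat (?d (Inr l0))" .
  moreover have "0 < card ?M" using False fin unfolding M by (simp add: card_gt_0_iff finite_PiE)
  ultimately show ?thesis unfolding c_val_def by (simp add: divide_le_eq mult.commute)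
qed

end

theorem lemma6:
  fixes V :: "'v set" and E :: "'e set" and ends :: "'e \<Rightarrow> 'v set"
    and L :: "'l set" and lends :: "'l \<Rightarrow> 'v set"
    and OPT :: "'l set" and F :: "('v + 'l) set set" and r :: 'l
  assumes inst: "cacap_instance V E ends L lends"
    and opt: "cacap_opt V E ends L lends OPT"
    and st: "steiner_tree V E ends L lends (Inl ` terminals V E ends \<union> Inr ` OPT) F"
    and size: "card F = card OPT + card (terminals V E ends) - 1"
    and leaves: "\<forall>t\<in>terminals V E ends. card {e\<in>F. Inl t \<in> e} = 1"
    and root: "r \<in> OPT" "\<exists>t\<in>terminals V E ends. {Inr r, Inl t} \<in> F"
  shows "\<forall>l\<in>OPT. c_val (terminals V E ends) OPT F (Inr r) l
                 \<le> Hhat (card (children F (Inr r) (Inr l)))"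
proof
  fix l assume "l \<in> OPT"
  interpret leaf_terminal_tree "Inl ` terminals V E ends \<union> Inr ` OPT" F r "terminals V E ends" OPT
    using st leaves root(1) by unfold_locales (auto simp: steiner_tree_def)
  show "c_val (terminals V E ends) OPT F (Inr r) l \<le> Hhat (card (children F (Inr r) (Inr l)))"
    using c_val_le_Hhat \<open>l \<in> OPT\<close> .
qed

end
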